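(* Let $r\geq 1$ be an integer. For $n\geq 0$ write $\prod_{j=0}^{n-1}\left(1+x^{2^j}\right)^3=\sum_{k\geq 0}c_k(n)x^k$ and let $u(n)=\sum_{k\geq 0}c_k(n)^r$. Then there exist rational constants $c_0,\dots,c_r$ (depending on $r$) such that $$u(n)=\sum_{i=0}^{r}c_i\,2^{(2i+1)n}\quad\text{for all } n\geq 0.$$ *)

theory Defs
  imports "HOL-Computational_Algebra.Polynomial"
begin

definition cube_poly :: "nat \<Rightarrow> int poly" where
  "cube_poly n = (\<Prod>j<n. (1 + monom 1 (2 ^ j)) ^ 3)"

definition ccoef :: "nat \<Rightarrow> nat \<Rightarrow> int" where
  "ccoef k n = coeff (cube_poly n) k"

text \<open>u(n) = sum over k >= 0 of c_k(n)^r; coefficients vanish beyond the degree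
  and r >= 1, so summing up to the degree gives the full sum.\<close>
definition u :: "nat \<Rightarrow> nat \<Rightarrow> int" where
  "u r n = (\<Sum>k\<le>degree (cube_poly n). ccoef k n ^ r)"

end

theory Submission
  imports Defs
begin

(*
  With N = 2^n the product is (1 + x + ... + x^(N-1))^3, by uniqueness of binary expansions.
  Multiplied by (1 - x)^3 it becomes (1 - x^N)^3, so its coefficients are those of
  (1 - x^N)^3 / (1 - x)^3: the triangular numbers T(k+1) at the first N - 1 indices, their
  mirror image at the last N - 1 indices, and (3 N^2 + 1 - y^2) / 4 in between, where
  y = 2 i - N + 1 runs over the N points 1 - N, 3 - N, ..., N - 1. Hence

    u(n) = 2 * sum_{j<N} T(j)^r + sum_y ((3 N^2 + 1 - y^2) / 4)^r.

  Summing an even polynomial p of degree 2 d over the points 1 - N, 3 - N, ..., N - 1 gives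
  an odd polynomial of degree 2 d + 1 in N: a discrete antiderivative G with
  G(x + 2) - G(x) = 2 p(x + 1) can be chosen odd because p is even. The first sum is of this
  kind over 2 N points, with p(y) = ((y^2 - 1) / 8)^r since T(j) = ((2 j + 1)^2 - 1) / 8; the
  second one is after a binomial expansion in y^2. So u(n) is an odd polynomial of degree at
  most 2 r + 1 in N = 2^n.
*)

section \<open>Discrete antiderivatives of polynomials\<close>

lemma poly_periodic_imp_const:
  fixes R :: "'a::field_char_0 poly"
  assumes "a \<noteq> 0" and periodic: "\<And>x. poly R (x + a) = poly R x"
  shows "poly R x = poly R 0"
proof -
  define Q where "Q = R - [:poly R 0:]"
  have "range (\<lambda>n. of_nat n * a) \<subseteq> {x. poly Q x = 0}"
  proof clarify
    fix n
    show "poly Q (of_nat n * a) = 0"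
    proof (induction n)
      case (Suc n)
      then show ?case
        using periodic[of "of_nat n * a"] by (simp add: Q_def algebra_simps)
    qed (simp add: Q_def)
  qed
  moreover have "infinite (range (\<lambda>n. of_nat n * a))"
    using \<open>a \<noteq> 0\<close> by (intro range_inj_infinite) (simp add: inj_on_def)
  ultimately have "Q = 0"
    using poly_roots_finite finite_subset by blast
  then have "poly Q x = 0"
    by simp
  then show ?thesis
    by (simp add: Q_def)
qed

lemma monom_antidifference:
  "\<exists>S :: 'a::field_char_0 poly. degree S \<le> d + 1 \<and> (\<forall>x. poly S (x + 1) - poly S x = x ^ d)"
proof (induction d rule: less_induct)
  case (less d)
  then obtain T :: "nat \<Rightarrow> 'a poly" where T: "\<And>k. k < d \<Longrightarrow>
      degree (T k) \<le> k + 1 \<and> (\<forall>x. poly (T k) (x + 1) - poly (T k) x = x ^ k)"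
    by metis
  \<comment> \<open>the difference of x^(d+1) is (d+1) x^d plus lower terms, which the T k cancel\<close>
  define S where "S = smult (1 / of_nat (d + 1))
      (monom 1 (d + 1) - (\<Sum>k<d. smult (of_nat (Suc d choose k)) (T k)))"
  have "degree (T k) \<le> d + 1" if "k < d" for k
    using T[OF that] that by simp
  then have "degree S \<le> d + 1"
    unfolding S_def
    by (intro order.trans[OF degree_smult_le] degree_diff_le degree_sum_le)
       (auto simp: degree_monom_eq intro: order.trans[OF degree_smult_le])
  moreover have "poly S (x + 1) - poly S x = x ^ d" for x
  proof -
    have "(x + 1) ^ (d + 1) = (\<Sum>k\<le>d + 1. of_nat (Suc d choose k) * x ^ k)"
      using binomial_ring[of x 1 "d + 1"] by simp
    also have "\<dots> = (\<Sum>k<d. of_nat (Suc d choose k) * x ^ k) + of_nat (d + 1) * x ^ d + x ^ (d + 1)"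
      by (simp add: lessThan_Suc_atMost[symmetric])
    finally have "(x + 1) ^ Suc d - x ^ Suc d =
        (\<Sum>k<d. of_nat (Suc d choose k) * x ^ k) + of_nat (Suc d) * x ^ d"
      by simp
    moreover have "(\<Sum>k<d. of_nat (Suc d choose k) * (poly (T k) (x + 1) - poly (T k) x)) =
        (\<Sum>k<d. of_nat (Suc d choose k) * x ^ k)"
      using T by (intro sum.cong) auto
    ultimately show ?thesis
      unfolding S_def
      by (simp add: poly_sum poly_monom algebra_simps sum_subtractf del: of_nat_Suc)
  qed
  ultimately show ?case
    by blast
qed

lemma poly_antidifference:
  fixes p :: "'a::field_char_0 poly"
  obtains S where "degree S \<le> degree p + 1" "\<And>x. poly S (x + 1) - poly S x = poly p x"
proof -
  obtain T :: "nat \<Rightarrow> 'a poly" where T: "\<And>k. degree (T k) \<le> k + 1"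
      "\<And>k x. poly (T k) (x + 1) - poly (T k) x = x ^ k"
    using monom_antidifference by metis
  define S where "S = (\<Sum>k\<le>degree p. smult (coeff p k) (T k))"
  have "degree S \<le> degree p + 1"
    unfolding S_def using T(1)
    by (intro degree_sum_le) (auto intro: order.trans[OF degree_smult_le] order.trans)
  moreover have "poly S (x + 1) - poly S x = poly p x" for x
    unfolding S_def poly_altdef[of p x]
    by (simp add: poly_sum sum_subtractf[symmetric] right_diff_distrib[symmetric] T(2))
  ultimately show ?thesis
    using that by blast
qed

section \<open>Sums over points placed symmetrically around zero\<close>

definition centered_sum :: "('a::ring_1 \<Rightarrow> 'b::comm_monoid_add) \<Rightarrow> nat \<Rightarrow> 'b" where
  "centered_sum f N = (\<Sum>i<N. f (2 * of_nat i - of_nat N + 1))"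

lemma centered_sum_0 [simp]: "centered_sum f 0 = 0"
  by (simp add: centered_sum_def)

lemma centered_sum_Suc_Suc:
  fixes f :: "'a::ring_1 \<Rightarrow> 'b::comm_monoid_add"
  shows "centered_sum f (Suc (Suc N)) = f (- (of_nat N + 1)) + centered_sum f N + f (of_nat N + 1)"
proof -
  have first: "2 * of_nat 0 - of_nat (Suc (Suc N)) + 1 = (- (of_nat N + 1) :: 'a)"
    by simp
  have shift: "2 * of_nat (Suc i) - of_nat (Suc (Suc N)) + 1 = (2 * of_nat i - of_nat N + 1 :: 'a)"
    for i by (simp add: algebra_simps)
  have last: "2 * of_nat N - of_nat N + 1 = (of_nat N + 1 :: 'a)"
    by (simp add: mult_2)
  show ?thesis
    unfolding centered_sum_def
    by (subst sum.lessThan_Suc, subst sum.lessThan_Suc_shift) (simp only: first shift last)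
qed

lemma centered_sum_double:
  fixes f :: "'a::ring_1 \<Rightarrow> 'b::comm_monoid_add"
  shows "centered_sum f (2 * N) = (\<Sum>j<N. f (- (2 * of_nat j + 1)) + f (2 * of_nat j + 1))"
proof (induction N)
  case (Suc N)
  have "centered_sum f (2 * Suc N) =
      f (- (of_nat (2 * N) + 1)) + centered_sum f (2 * N) + f (of_nat (2 * N) + 1)"
    using centered_sum_Suc_Suc[of f "2 * N"] by (simp only: mult_Suc_right add_2_eq_Suc)
  then show ?case
    using Suc.IH by (simp add: add_ac)
qed simp

lemma centered_sum_binomial:
  fixes a b :: "'a::comm_ring_1"
  shows "centered_sum (\<lambda>y. (a + b * y ^ 2) ^ r) N =
    (\<Sum>k\<le>r. a ^ k * (of_nat (r choose k) * b ^ (r - k) * centered_sum (\<lambda>y. y ^ (2 * (r - k))) N))"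
proof -
  have "(a + b * y ^ 2) ^ r = (\<Sum>k\<le>r. a ^ k * (of_nat (r choose k) * b ^ (r - k) * y ^ (2 * (r - k))))"
    for y
    by (simp only: binomial_ring power_mult_distrib power_mult) (simp add: mult_ac)
  then show ?thesis
    unfolding centered_sum_def by (simp only: sum_distrib_left) (rule sum.swap)
qed

lemma even_poly_odd_antidifference:
  fixes p :: "'a::field_char_0 poly"
  assumes even: "\<And>x. poly p (- x) = poly p x"
  obtains G where "degree G \<le> degree p + 1" "\<And>x. poly G (- x) = - poly G x"
    "\<And>x. poly G (x + 2) - poly G x = 2 * poly p (x + 1)"
proof -
  define q where "q = pcompose (smult 2 p) [:1, 2:]"
  obtain S where S: "degree S \<le> degree q + 1" "\<And>y. poly S (y + 1) - poly S y = poly q y"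
    using poly_antidifference[of q] by blast
  define G where "G = pcompose S [:0, 1/2:] - [:poly S 0:]"
  have G_eq: "poly G x = poly S (x / 2) - poly S 0" for x
    unfolding G_def by (simp add: poly_pcompose)
  have "degree G \<le> degree S"
    unfolding G_def using degree_pcompose_le[of S "[:0, 1/2:]"] by (intro degree_diff_le) auto
  also have "degree S \<le> degree p + 1"
    using S(1) by (simp add: q_def degree_pcompose)
  finally have degree_G: "degree G \<le> degree p + 1" .
  have G_step: "poly G (x + 2) - poly G x = 2 * poly p (x + 1)" for x
    using S(2)[of "x / 2"] by (simp add: G_eq q_def poly_pcompose add_divide_distrib algebra_simps)
  \<comment> \<open>G(x) + G(-x) has period 2 because p is even, and it vanishes at 0\<close>
  define R where "R = G + pcompose G [:0, -1:]"
  have R_eq: "poly R x = poly G x + poly G (- x)" for x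
    unfolding R_def by (simp add: poly_pcompose)
  have "poly R (x + 2) = poly R x" for x
    using G_step[of x] G_step[of "- x - 2"] even[of "x + 1"] by (simp add: R_eq algebra_simps)
  then have "poly R x = poly R 0" for x
    by (rule poly_periodic_imp_const[rotated]) simp
  then have "poly G x + poly G (- x) = 0" for x
    by (simp add: R_eq G_eq)
  then have "poly G (- x) = - poly G x" for x
    by (simp add: eq_neg_iff_add_eq_0 add.commute)
  with degree_G G_step show ?thesis
    using that by blast
qed

lemma centered_sum_eq_odd_antidifference:
  fixes p G :: "'a::field_char_0 poly"
  assumes even: "\<And>x. poly p (- x) = poly p x" and odd: "\<And>x. poly G (- x) = - poly G x"
    and G_step: "\<And>x. poly G (x + 2) - poly G x = 2 * poly p (x + 1)"
  shows "centered_sum (poly p) N = poly G (of_nat N)"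
proof (induction N rule: nat_induct2)
  case 0
  show ?case
    using odd[of 0] by simp
next
  case 1
  show ?case
    using G_step[of "- 1"] odd[of 1] by (simp add: centered_sum_def)
next
  case (step N)
  then show ?case
    using G_step[of "of_nat N"] even[of "of_nat N + 1"]
    by (simp add: centered_sum_Suc_Suc algebra_simps)
qed

section \<open>Sequences given by odd polynomials\<close>

definition odd_poly_seq :: "nat \<Rightarrow> (nat \<Rightarrow> 'a::field_char_0) \<Rightarrow> bool" where
  "odd_poly_seq d F \<longleftrightarrow> (\<exists>G. degree G \<le> 2 * d + 1 \<and> (\<forall>x. poly G (- x) = - poly G x) \<and>
     (\<forall>N. F N = poly G (of_nat N)))"

lemma odd_poly_seq_centered_sum:
  fixes p :: "'a::field_char_0 poly"
  assumes even: "\<And>x. poly p (- x) = poly p x" and "degree p \<le> 2 * d"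
  shows "odd_poly_seq d (centered_sum (poly p))"
proof -
  obtain G where "degree G \<le> degree p + 1" "\<And>x. poly G (- x) = - poly G x"
      "\<And>x. poly G (x + 2) - poly G x = 2 * poly p (x + 1)"
    using even_poly_odd_antidifference even by blast
  with assms show ?thesis
    unfolding odd_poly_seq_def
    by (intro exI[of _ G]) (auto intro: centered_sum_eq_odd_antidifference)
qed

lemma odd_poly_seq_zero: "odd_poly_seq d (\<lambda>N. 0)"
  unfolding odd_poly_seq_def by (intro exI[of _ 0]) simp

lemma odd_poly_seq_add:
  assumes "odd_poly_seq d F" and "odd_poly_seq d H"
  shows "odd_poly_seq d (\<lambda>N. F N + H N)"
proof -
  obtain G1 G2 where "degree G1 \<le> 2 * d + 1" "\<forall>x. poly G1 (- x) = - poly G1 x" "\<forall>N. F N = poly G1 (of_nat N)"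
      "degree G2 \<le> 2 * d + 1" "\<forall>x. poly G2 (- x) = - poly G2 x" "\<forall>N. H N = poly G2 (of_nat N)"
    using assms unfolding odd_poly_seq_def by blast
  then show ?thesis
    unfolding odd_poly_seq_def by (intro exI[of _ "G1 + G2"]) (auto intro: degree_add_le)
qed

lemma odd_poly_seq_cmult:
  assumes "odd_poly_seq d F"
  shows "odd_poly_seq d (\<lambda>N. c * F N)"
proof -
  obtain G where "degree G \<le> 2 * d + 1" "\<forall>x. poly G (- x) = - poly G x" "\<forall>N. F N = poly G (of_nat N)"
    using assms unfolding odd_poly_seq_def by blast
  then show ?thesis
    unfolding odd_poly_seq_def
    by (intro exI[of _ "smult c G"]) (auto intro: order.trans[OF degree_smult_le])
qed

lemma odd_poly_seq_sum:
  "finite I \<Longrightarrow> (\<And>i. i \<in> I \<Longrightarrow> odd_poly_seq d (F i)) \<Longrightarrow> odd_poly_seq d (\<lambda>N. \<Sum>i\<in>I. F i N)"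
  by (induction I rule: finite_induct) (auto simp: odd_poly_seq_zero odd_poly_seq_add)

lemma odd_poly_seq_mult_even_poly:
  fixes E :: "'a::field_char_0 poly"
  assumes "\<And>x. poly E (- x) = poly E x" and "degree E \<le> 2 * a" and "odd_poly_seq b F"
  shows "odd_poly_seq (a + b) (\<lambda>N. poly E (of_nat N) * F N)"
proof -
  obtain G where "degree G \<le> 2 * b + 1" "\<forall>x. poly G (- x) = - poly G x" "\<forall>N. F N = poly G (of_nat N)"
    using assms(3) unfolding odd_poly_seq_def by blast
  with assms(1,2) show ?thesis
    unfolding odd_poly_seq_def
    by (intro exI[of _ "E * G"]) (auto intro!: order.trans[OF degree_mult_le])
qed

lemma odd_poly_seq_double:
  assumes "odd_poly_seq d F"
  shows "odd_poly_seq d (\<lambda>N. F (2 * N))"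
proof -
  obtain G where deg: "degree G \<le> 2 * d + 1" and odd: "\<And>x. poly G (- x) = - poly G x"
    and F_eq: "\<And>N. F N = poly G (of_nat N)"
    using assms unfolding odd_poly_seq_def by blast
  define G2 where "G2 = pcompose G [:0, 2:]"
  have G2_eq: "poly G2 x = poly G (2 * x)" for x
    by (simp add: G2_def poly_pcompose ac_simps)
  have "degree G2 \<le> 2 * d + 1"
    using degree_pcompose_le[of G "[:0, 2:]"] deg by (simp add: G2_def)
  moreover have "poly G2 (- x) = - poly G2 x" for x
    using odd[of "2 * x"] by (simp add: G2_eq)
  moreover have "F (2 * N) = poly G2 (of_nat N)" for N
    by (simp add: G2_eq F_eq)
  ultimately show ?thesis
    unfolding odd_poly_seq_def by blast
qed

lemma odd_poly_eq_sum_odd_powers: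
  fixes G :: "'a::field_char_0 poly"
  assumes "degree G \<le> 2 * d + 1" and odd: "\<And>x. poly G (- x) = - poly G x"
  shows "poly G x = (\<Sum>i\<le>d. coeff G (2 * i + 1) * x ^ (2 * i + 1))"
proof -
  have expand: "poly G y = (\<Sum>k\<le>2 * d + 1. coeff G k * y ^ k)" for y
  proof -
    have "poly G y = poly (\<Sum>k\<le>2 * d + 1. monom (coeff G k) k) y"
      by (simp only: poly_as_sum_of_monoms'[OF assms(1)])
    then show ?thesis
      by (simp add: poly_sum poly_monom)
  qed
  have "2 * poly G x = poly G x - poly G (- x)"
    using odd[of x] by simp
  also have "\<dots> = (\<Sum>k\<le>2 * d + 1. coeff G k * (x ^ k - (- x) ^ k))"
    unfolding expand[of x] expand[of "- x"] by (simp add: sum_subtractf[symmetric] right_diff_distrib)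
  also have "\<dots> = (\<Sum>i\<le>d. 2 * (coeff G (2 * i + 1) * x ^ (2 * i + 1)))"
    unfolding Suc_eq_plus1[symmetric] sum.in_pairs_0 by (intro sum.cong refl) simp
  also have "\<dots> = 2 * (\<Sum>i\<le>d. coeff G (2 * i + 1) * x ^ (2 * i + 1))"
    by (simp add: sum_distrib_left)
  finally show ?thesis
    by simp
qed

lemma odd_poly_seq_imp_sum_odd_powers:
  assumes "odd_poly_seq d F"
  obtains c where "\<And>N. F N = (\<Sum>i\<le>d. c i * of_nat N ^ (2 * i + 1))"
proof -
  obtain G where deg: "degree G \<le> 2 * d + 1" and odd: "\<And>x. poly G (- x) = - poly G x"
    and F_eq: "\<And>N. F N = poly G (of_nat N)"
    using assms unfolding odd_poly_seq_def by blast
  have "F N = (\<Sum>i\<le>d. coeff G (2 * i + 1) * of_nat N ^ (2 * i + 1))" for N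
    unfolding F_eq by (rule odd_poly_eq_sum_odd_powers[OF deg odd])
  then show ?thesis
    by (rule that)
qed

section \<open>The coefficients of the cube of a geometric sum\<close>

lemma sum_lessThan_add:
  fixes f :: "nat \<Rightarrow> 'a::comm_monoid_add"
  shows "(\<Sum>k<a + b. f k) = (\<Sum>k<a. f k) + (\<Sum>k<b. f (a + k))"
  by (induction b) (simp_all add: add.assoc)

lemma prod_one_plus_monom_power_of_two:
  "(\<Prod>j<n. 1 + monom 1 (2 ^ j)) = (\<Sum>k<2 ^ n. monom (1::'a::comm_semiring_1) k)"
proof (induction n)
  case 0
  then show ?case
    by (simp add: one_poly_def monom_0)
next
  case (Suc n)
  have "(\<Prod>j<Suc n. 1 + monom 1 (2 ^ j)) = (\<Sum>k<2 ^ n. monom (1::'a) k) * (1 + monom 1 (2 ^ n))"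
    by (simp add: Suc.IH)
  also have "\<dots> = (\<Sum>k<2 ^ n. monom 1 k) + (\<Sum>k<2 ^ n. monom 1 (2 ^ n + k))"
    by (simp add: distrib_left sum_distrib_right mult_monom add.commute)
  also have "\<dots> = (\<Sum>k<2 ^ n + 2 ^ n. monom 1 k)"
    by (rule sum_lessThan_add[symmetric])
  finally show ?case
    by (simp add: mult_2)
qed

lemma cube_poly_eq_geom_sum_cube: "cube_poly n = (\<Sum>k<2 ^ n. monom 1 k) ^ 3"
  unfolding cube_poly_def prod_power_distrib[symmetric] prod_one_plus_monom_power_of_two ..

lemma one_minus_monom_cube:
  "(1 - monom (1::'a::comm_ring_1) n) ^ 3 =
    1 - smult 3 (monom 1 n) + smult 3 (monom 1 (2 * n)) - monom 1 (3 * n)"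
proof -
  have "(1 - X) ^ 3 = 1 - 3 * X + 3 * X ^ 2 - X ^ 3" for X :: "'a poly"
    by (simp add: power3_eq_cube power2_eq_square algebra_simps)
  then show ?thesis
    by (simp add: monom_power numeral_mult_conv_smult mult.commute)
qed

text \<open>Coefficients indexed by integers and zero at negative indices, so that index shifts
  need no truncated subtraction.\<close>

definition icoeff :: "'a::zero poly \<Rightarrow> int \<Rightarrow> 'a" where
  "icoeff P m = (if m < 0 then 0 else coeff P (nat m))"

lemma icoeff_neg [simp]: "m < 0 \<Longrightarrow> icoeff P m = 0"
  by (simp add: icoeff_def)

lemma icoeff_1: "icoeff 1 m = of_bool (m = 0)"
  by (simp add: icoeff_def coeff_1 nat_eq_iff)

lemma icoeff_monom_mult:
  fixes P :: "'a::comm_semiring_1 poly"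
  shows "icoeff (monom 1 n * P) m = icoeff P (m - int n)"
  by (auto simp: icoeff_def coeff_monom_mult nat_diff_distrib)

definition cube_diff :: "nat \<Rightarrow> (int \<Rightarrow> 'a::comm_ring_1) \<Rightarrow> int \<Rightarrow> 'a" where
  "cube_diff n f m = f m - 3 * f (m - int n) + 3 * f (m - 2 * int n) - f (m - 3 * int n)"

lemma icoeff_one_minus_monom_cube_mult:
  fixes P :: "'a::comm_ring_1 poly"
  shows "icoeff ((1 - monom 1 n) ^ 3 * P) m = cube_diff n (icoeff P) m"
proof -
  have "icoeff ((1 - monom 1 n) ^ 3 * P) m = icoeff P m - 3 * icoeff (monom 1 n * P) m
      + 3 * icoeff (monom 1 (2 * n) * P) m - icoeff (monom 1 (3 * n) * P) m"
    unfolding one_minus_monom_cube by (simp add: icoeff_def algebra_simps)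
  then show ?thesis
    by (simp only: icoeff_monom_mult cube_diff_def of_nat_mult of_nat_numeral)
qed

lemma cube_diff_commute: "cube_diff a (cube_diff b f) m = cube_diff b (cube_diff a f) m"
  by (simp add: cube_diff_def algebra_simps)

lemma cube_diff_of_int: "cube_diff n (\<lambda>m. of_int (f m)) m = of_int (cube_diff n f m)"
  by (simp add: cube_diff_def)

lemma cube_diff_1_cancel:
  fixes f g :: "int \<Rightarrow> 'a::comm_ring_1"
  assumes "\<And>m. m < 0 \<Longrightarrow> f m = 0" "\<And>m. m < 0 \<Longrightarrow> g m = 0"
    and "\<And>m. cube_diff 1 f m = cube_diff 1 g m"
  shows "f m = g m"
proof -
  have "\<forall>m < int K. f m = g m" for K
  proof (induction K)
    case 0
    then show ?case
      using assms(1,2) by simp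
  next
    case (Suc K)
    then have "f (int K - k) = g (int K - k)" if "k > 0" for k
      using that by simp
    then have "f (int K) = g (int K)"
      using assms(3)[of "int K"] by (simp add: cube_diff_def)
    show ?case
    proof (intro allI impI)
      fix m
      assume "m < int (Suc K)"
      then have "m < int K \<or> m = int K"
        by linarith
      then show "f m = g m"
        using Suc.IH \<open>f (int K) = g (int K)\<close> by blast
    qed
  qed
  moreover have "m < int (nat m + 1)"
    by simp
  ultimately show ?thesis
    by blast
qed

text \<open>The coefficients (m + 1) (m + 2) / 2 of 1 / (1 - x)^3, extended by zero to negative m.\<close>

definition inv_cube_coeff :: "int \<Rightarrow> rat" where
  "inv_cube_coeff m = (if m < 0 then 0 else of_int ((m + 1) * (m + 2)) / 2)"

lemma inv_cube_coeff_eq: "m \<ge> -2 \<Longrightarrow> inv_cube_coeff m = of_int ((m + 1) * (m + 2)) / 2"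
proof -
  assume "m \<ge> -2"
  then consider "m = -2" | "m = -1" | "m \<ge> 0"
    by linarith
  then show ?thesis
    by cases (auto simp: inv_cube_coeff_def)
qed

lemma inv_cube_coeff_neg: "m < 0 \<Longrightarrow> inv_cube_coeff m = 0"
  by (simp add: inv_cube_coeff_def)

lemma cube_diff_1_inv_cube_coeff: "cube_diff 1 inv_cube_coeff = (\<lambda>m. of_bool (m = 0))"
proof
  fix m :: int
  consider "m < 0" | "m = 0" | "m = 1" | "m = 2" | "m \<ge> 3"
    by linarith
  then show "cube_diff 1 inv_cube_coeff m = of_bool (m = 0)"
    by cases (auto simp: cube_diff_def inv_cube_coeff_def field_simps)
qed

lemma icoeff_geom_sum_cube:
  "of_int (icoeff ((\<Sum>k<N. monom 1 k) ^ 3) m) = cube_diff N inv_cube_coeff m"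
proof (rule cube_diff_1_cancel)
  define P :: "int poly" where "P = (\<Sum>k<N. monom 1 k) ^ 3"
  have "(1 - monom 1 1) ^ 3 * P = (1 - monom 1 N) ^ 3 * 1"
    using one_diff_power_eq[of "monom (1::int) 1" N]
    by (simp add: P_def monom_power power_mult_distrib[symmetric])
  then have "cube_diff 1 (\<lambda>m. of_int (icoeff P m)) m = cube_diff N (\<lambda>m. of_int (icoeff 1 m)) m" for m
    unfolding cube_diff_of_int icoeff_one_minus_monom_cube_mult[symmetric] by simp
  also have "\<dots> m = cube_diff N (\<lambda>m. of_bool (m = 0)) m" for m
    by (simp add: icoeff_1)
  also have "\<dots> m = cube_diff 1 (cube_diff N inv_cube_coeff) m" for m
    unfolding cube_diff_commute[of 1 N] cube_diff_1_inv_cube_coeff ..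
  finally show "cube_diff 1 (\<lambda>m. of_int (icoeff P m)) m = cube_diff 1 (cube_diff N inv_cube_coeff) m" for m
    .
qed (auto simp: cube_diff_def inv_cube_coeff_def)

definition triangular :: "nat \<Rightarrow> rat" where
  "triangular j = of_nat j * (of_nat j + 1) / 2"

definition middle_coeff :: "nat \<Rightarrow> rat \<Rightarrow> rat" where
  "middle_coeff N y = (3 * of_nat N ^ 2 + 1 - y ^ 2) / 4"

lemma cube_diff_inv_cube_coeff_low:
  "k < M \<Longrightarrow> cube_diff (Suc M) inv_cube_coeff (int k) = triangular (Suc k)"
  unfolding cube_diff_def triangular_def by (simp add: inv_cube_coeff_eq inv_cube_coeff_neg field_simps)

lemma cube_diff_inv_cube_coeff_middle:
  "i < Suc M \<Longrightarrow> cube_diff (Suc M) inv_cube_coeff (int (M + i)) =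
    middle_coeff (Suc M) (2 * of_nat i - of_nat (Suc M) + 1)"
  unfolding cube_diff_def middle_coeff_def
  by (simp add: inv_cube_coeff_eq inv_cube_coeff_neg field_simps power2_eq_square)

lemma cube_diff_inv_cube_coeff_high:
  "j < Suc M \<Longrightarrow> cube_diff (Suc M) inv_cube_coeff (int (M + Suc M + j)) = triangular (M - j)"
  unfolding cube_diff_def triangular_def
  by (simp add: inv_cube_coeff_eq inv_cube_coeff_neg field_simps of_nat_diff)

lemma sum_power_coeff_geom_sum_cube:
  fixes N r :: nat
  assumes "r \<ge> 1" and "N > 0"
  defines "P \<equiv> (\<Sum>k<N. monom 1 k) ^ 3 :: int poly"
  shows "(\<Sum>k\<le>degree P. of_int (coeff P k) ^ r) =
    2 * (\<Sum>j<N. triangular j ^ r) + centered_sum (\<lambda>y. middle_coeff N y ^ r) N"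
proof -
  obtain M where N: "N = Suc M"
    using \<open>N > 0\<close> gr0_conv_Suc by blast
  let ?c = "\<lambda>k. cube_diff (Suc M) inv_cube_coeff (int k)"
  have coeff_P: "of_int (coeff P k) = ?c k" for k
    using icoeff_geom_sum_cube[of N "int k"] by (simp add: P_def icoeff_def N)
  have "degree (\<Sum>k<N. monom (1::int) k) \<le> M"
    unfolding N by (intro degree_sum_le) (auto intro: order.trans[OF degree_monom_le])
  then have "degree P \<le> M * 3"
    unfolding P_def using degree_power_le order.trans mult_le_mono1 by blast
  have "(\<Sum>k\<le>degree P. of_int (coeff P k) ^ r) = (\<Sum>k\<le>degree P. ?c k ^ r)"
    by (simp add: coeff_P)
  also have "\<dots> = (\<Sum>k<M + Suc M + Suc M. ?c k ^ r)"
  proof (rule sum.mono_neutral_left)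
    show "{..degree P} \<subseteq> {..<M + Suc M + Suc M}"
      using \<open>degree P \<le> M * 3\<close> by auto
    show "\<forall>k\<in>{..<M + Suc M + Suc M} - {..degree P}. ?c k ^ r = 0"
      using \<open>r \<ge> 1\<close> by (auto simp: coeff_P[symmetric] coeff_eq_0)
  qed simp
  also have "\<dots> = (\<Sum>k<M. ?c k ^ r) + (\<Sum>i<Suc M. ?c (M + i) ^ r) + (\<Sum>j<Suc M. ?c (M + Suc M + j) ^ r)"
    by (simp only: sum_lessThan_add)
  also have "(\<Sum>k<M. ?c k ^ r) = (\<Sum>k<M. triangular (Suc k) ^ r)"
    by (simp add: cube_diff_inv_cube_coeff_low)
  also have "\<dots> = (\<Sum>j<Suc M. triangular j ^ r)"
    using \<open>r \<ge> 1\<close> by (simp add: sum.lessThan_Suc_shift triangular_def del: sum.lessThan_Suc)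
  also have "(\<Sum>i<Suc M. ?c (M + i) ^ r) = centered_sum (\<lambda>y. middle_coeff N y ^ r) N"
    unfolding centered_sum_def N
    by (intro sum.cong refl) (simp only: lessThan_iff cube_diff_inv_cube_coeff_middle)
  also have "(\<Sum>j<Suc M. ?c (M + Suc M + j) ^ r) = (\<Sum>j<Suc M. triangular (M - j) ^ r)"
    by (intro sum.cong refl) (simp only: lessThan_iff cube_diff_inv_cube_coeff_high)
  also have "\<dots> = (\<Sum>j<Suc M. triangular j ^ r)"
    using sum.nat_diff_reindex[of "\<lambda>j. triangular j ^ r" "Suc M"] by simp
  finally show ?thesis
    by (simp add: N)
qed

section \<open>The power sums\<close>

lemma odd_poly_seq_sum_triangular_power: "odd_poly_seq r (\<lambda>N. 2 * (\<Sum>j<N. triangular j ^ r))"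
proof -
  define P :: "rat poly" where "P = [:-1/8, 0, 1/8:] ^ r"
  have P_eq: "poly P y = ((y ^ 2 - 1) / 8) ^ r" for y
    by (simp add: P_def poly_power power2_eq_square field_simps)
  have "degree P \<le> 2 * r"
    unfolding P_def using degree_power_le[of "[:-1/8, 0, 1/8:] :: rat poly" r] by simp
  then have "odd_poly_seq r (centered_sum (poly P))"
    by (intro odd_poly_seq_centered_sum) (simp_all add: P_eq)
  then have "odd_poly_seq r (\<lambda>N. centered_sum (poly P) (2 * N))"
    by (rule odd_poly_seq_double)
  moreover have "centered_sum (poly P) (2 * N) = 2 * (\<Sum>j<N. triangular j ^ r)" for N
  proof -
    have tri: "((2 * of_nat j + 1) ^ 2 - 1) / 8 = triangular j" for j
      by (simp add: triangular_def power2_eq_square field_simps)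
    then have tri_neg: "((- (2 * of_nat j + 1)) ^ 2 - 1) / 8 = triangular j" for j
      by (simp only: power2_minus)
    have "centered_sum (poly P) (2 * N) = (\<Sum>j<N. triangular j ^ r + triangular j ^ r)"
      by (simp only: centered_sum_double P_eq tri tri_neg)
    then show ?thesis
      by (simp only: mult_2 sum.distrib)
  qed
  ultimately show ?thesis
    by simp
qed

lemma odd_poly_seq_centered_sum_middle_coeff_power:
  "odd_poly_seq r (\<lambda>N. centered_sum (\<lambda>y. middle_coeff N y ^ r) N)"
proof -
  define E :: "nat \<Rightarrow> rat poly" where "E k = [:1/4, 0, 3/4:] ^ k" for k
  have E_eq: "poly (E k) x = ((3 * x ^ 2 + 1) / 4) ^ k" for k x
    by (simp add: E_def poly_power power2_eq_square field_simps)
  have degree_E: "degree (E k) \<le> 2 * k" for k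
    unfolding E_def using degree_power_le[of "[:1/4, 0, 3/4:] :: rat poly" k] by simp
  have even_powers: "odd_poly_seq (r - k) (centered_sum (\<lambda>y::rat. y ^ (2 * (r - k))))" for k
  proof -
    have "odd_poly_seq (r - k) (centered_sum (poly (monom (1::rat) (2 * (r - k)))))"
      by (rule odd_poly_seq_centered_sum) (simp_all add: poly_monom degree_monom_eq)
    moreover have "poly (monom 1 (2 * (r - k))) = (\<lambda>y::rat. y ^ (2 * (r - k)))"
      by (simp add: poly_monom fun_eq_iff)
    ultimately show ?thesis
      by simp
  qed
  define B where "B k N = poly (E k) (of_nat N) *
      (of_nat (r choose k) * (- 1/4) ^ (r - k) * centered_sum (\<lambda>y::rat. y ^ (2 * (r - k))) N)" for k N
  have "odd_poly_seq r (B k)" if "k \<le> r" for k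
  proof -
    have "odd_poly_seq (k + (r - k)) (B k)"
      unfolding B_def
      by (intro odd_poly_seq_mult_even_poly degree_E odd_poly_seq_cmult even_powers) (simp add: E_eq)
    with that show ?thesis
      by simp
  qed
  then have "odd_poly_seq r (\<lambda>N. \<Sum>k\<le>r. B k N)"
    by (intro odd_poly_seq_sum) auto
  moreover have "centered_sum (\<lambda>y. middle_coeff N y ^ r) N = (\<Sum>k\<le>r. B k N)" for N
  proof -
    have middle_coeff_split: "middle_coeff N y = (3 * of_nat N ^ 2 + 1) / 4 + (- 1/4) * y ^ 2" for y
      by (simp add: middle_coeff_def field_simps)
    show ?thesis
      unfolding middle_coeff_split centered_sum_binomial B_def E_eq ..
  qed
  ultimately show ?thesis
    by simp
qed

theorem theorem5p1:
  fixes r :: nat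
  assumes "r \<ge> 1"
  shows "\<exists>c :: nat \<Rightarrow> rat. \<forall>n :: nat.
           of_int (u r n) = (\<Sum>i\<le>r. c i * 2 ^ ((2 * i + 1) * n))"
proof -
  have "odd_poly_seq r (\<lambda>N. 2 * (\<Sum>j<N. triangular j ^ r) + centered_sum (\<lambda>y. middle_coeff N y ^ r) N)"
    by (intro odd_poly_seq_add odd_poly_seq_sum_triangular_power
        odd_poly_seq_centered_sum_middle_coeff_power)
  then obtain c where c: "\<And>N. 2 * (\<Sum>j<N. triangular j ^ r) + centered_sum (\<lambda>y. middle_coeff N y ^ r) N =
      (\<Sum>i\<le>r. c i * of_nat N ^ (2 * i + 1))"
    by (rule odd_poly_seq_imp_sum_odd_powers) auto
  have "of_int (u r n) = (\<Sum>i\<le>r. c i * 2 ^ ((2 * i + 1) * n))" for n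
  proof -
    have "of_int (u r n) = 2 * (\<Sum>j<2 ^ n. triangular j ^ r) + centered_sum (\<lambda>y. middle_coeff (2 ^ n) y ^ r) (2 ^ n)"
      using sum_power_coeff_geom_sum_cube[OF assms, of "2 ^ n"]
      by (simp add: u_def ccoef_def cube_poly_eq_geom_sum_cube)
    also have "\<dots> = (\<Sum>i\<le>r. c i * of_nat (2 ^ n) ^ (2 * i + 1))"
      by (rule c)
    also have "\<dots> = (\<Sum>i\<le>r. c i * 2 ^ ((2 * i + 1) * n))"
      by (simp only: of_nat_power of_nat_numeral power_mult[symmetric] mult.commute[of n])
    finally show ?thesis .
  qed
  then show ?thesis
    by blast
qed

end
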